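(* Let $p\equiv 3\pmod 4$ be prime and let $O_2^-(\mathbb{F}_p)=\{g\in GL_2(\mathbb{F}_p): g^Tg=I_2\}$, a group of order $2p+2$; enumerate its elements as $h_0,\dots,h_{2p+1}$. For $h\in O_2^-(\mathbb{F}_p)$ and $f\in\mathbb{F}_p[x_1,x_2,y_1,y_2]$, let $h\ast f$ denote the result of substituting $(x_1,x_2)^T\mapsto h(x_1,x_2)^T$ while fixing $y_1,y_2$. Let $u=x_1y_1+x_2y_2$, $\operatorname{Tr}(f)=\sum_{g\in O_2^-(\mathbb{F}_p)} g\cdot f$ (where $g\cdot$ acts simultaneously by $(x_1,x_2)^T\mapsto g(x_1,x_2)^T$, $(y_1,y_2)^T\mapsto g(y_1,y_2)^T$), and $f_i=u^i$ ($0\le i\le p+1$), $f_{p+1+j}=\operatorname{Tr}(x_1^{p+1-j}y_1^j)$ ($1\le j\le p$). Then $$\det\big(h_i\ast f_j\big)_{0\le i,j\le 2p+1}\neq 0$$ in $\mathbb{F}_p[x_1,x_2,y_1,y_2]$.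
   Context: The elements $(h_i,1)$ form a set of left coset representatives of $O_2^-(\mathbb{F}_p)\times O_2^-(\mathbb{F}_p)$ modulo the diagonally embedded $O_2^-(\mathbb{F}_p)$, and this determinant is the Jacobian determinant of the covariants $\omega_j=\sum_{g\in G/O_2^-}g(f_j)\otimes g$ in the sense of Broer–Chuai; the claim is equivalently that this Jacobian is nonzero. *)

theory Defs
  imports "HOL-Library.Poly_Mapping" "Jordan_Normal_Form.Determinant"
begin

text \<open>Multivariate polynomials over 'a: finitely supported maps from monomials
  (exponent vectors) to coefficients. Variables: x1 = 0, x2 = 1, y1 = 2, y2 = 3.\<close>

type_synonym 'a mpoly = "(nat \<Rightarrow>\<^sub>0 nat) \<Rightarrow>\<^sub>0 'a"

definition mvar :: "nat \<Rightarrow> 'a::comm_ring_1 mpoly" where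
  "mvar i = Poly_Mapping.single (Poly_Mapping.single i 1) 1"

definition mconst :: "'a::comm_ring_1 \<Rightarrow> 'a mpoly" where
  "mconst c = Poly_Mapping.single 0 c"

definition msubst :: "(nat \<Rightarrow> 'a::comm_ring_1 mpoly) \<Rightarrow> 'a mpoly \<Rightarrow> 'a mpoly" where
  "msubst \<sigma> f = (\<Sum>m\<in>Poly_Mapping.keys f. mconst (Poly_Mapping.lookup f m) * (\<Prod>i\<in>Poly_Mapping.keys m. \<sigma> i ^ Poly_Mapping.lookup m i))"

definition O2 :: "'a::field mat set" where
  "O2 = {g \<in> carrier_mat 2 2. invertible_mat g \<and> transpose_mat g * g = 1\<^sub>m 2}"

definition act_x :: "'a::field mat \<Rightarrow> 'a mpoly \<Rightarrow> 'a mpoly" where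
  "act_x h f = msubst (\<lambda>i. if i < 2 then (\<Sum>j<2. mconst (h $$ (i, j)) * mvar j) else mvar i) f"

definition act_xy :: "'a::field mat \<Rightarrow> 'a mpoly \<Rightarrow> 'a mpoly" where
  "act_xy g f = msubst (\<lambda>i. if i < 2 then (\<Sum>j<2. mconst (g $$ (i, j)) * mvar j)
      else if i < 4 then (\<Sum>j<2. mconst (g $$ (i - 2, j)) * mvar (j + 2)) else mvar i) f"

definition Tr :: "'a::field mpoly \<Rightarrow> 'a mpoly" where
  "Tr f = (\<Sum>g\<in>O2. act_xy g f)"

definition u_inv :: "'a::field mpoly" where
  "u_inv = mvar 0 * mvar 2 + mvar 1 * mvar 3"

definition fpoly :: "nat \<Rightarrow> nat \<Rightarrow> 'a::field mpoly" where
  "fpoly p i = (if i \<le> p + 1 then u_inv ^ i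
      else (let j = i - (p + 1) in Tr (mvar 0 ^ (p + 1 - j) * mvar 2 ^ j)))"

end

theory Submission
  imports Defs "HOL-Algebra.Algebraic_Closure_Type" "HOL-Number_Theory.Residues"
begin

(* Specialise (x1, x2, y1, y2) to (i, 1, i, 1), where i is a square root of -1 in the algebraic
   closure. As -1 is not a square in F_p, the elements a + c i (a, c in F_p) are pairwise distinct
   and the Frobenius z |-> z^p maps a + c i to a - c i, so (a + c i)^(p+1) = a^2 + c^2.
   O_2 consists of the rotations and reflections attached to the p + 1 points (a, c) of the
   unit circle a^2 + c^2 = 1. At the rotation with z = a + c i the invariant u vanishes, and the
   summand for k in O_2 of the trace defining f_(p+1+j) is z^(p+1-j) times the norm
   w^(p+1) = k00^2 + k01^2 = 1 of w = k01 + k00 i; as |O_2| = 2p + 2 is 2 in F_p, the row of the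
   matrix is (1, 0, ..., 0, 2 z^p, ..., 2 z). The row of a reflection starts with the powers m^j
   (j <= p + 1) of m = -2 (a - c i). A vector in the kernel of the evaluated matrix thus yields
   polynomials of degree at most p vanishing at the p + 1 distinct values of z, resp. of m, so it
   is zero. Hence the evaluated determinant, and with it the determinant, is nonzero. *)

hide_const (open) Divisibility.prime UnivPoly.monom UnivPoly.coeff Polynomials.degree

section \<open>Evaluating multivariate polynomials\<close>

definition eval_monom :: "(nat \<Rightarrow> 'b::comm_semiring_1) \<Rightarrow> (nat \<Rightarrow>\<^sub>0 nat) \<Rightarrow> 'b" where
  "eval_monom \<sigma> m = (\<Prod>i\<in>Poly_Mapping.keys m. \<sigma> i ^ Poly_Mapping.lookup m i)"

definition eval_mpoly :: "('a::zero \<Rightarrow> 'b::comm_semiring_1) \<Rightarrow> (nat \<Rightarrow> 'b) \<Rightarrow> 'a mpoly \<Rightarrow> 'b" where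
  "eval_mpoly \<phi> \<sigma> f = (\<Sum>m\<in>Poly_Mapping.keys f. \<phi> (Poly_Mapping.lookup f m) * eval_monom \<sigma> m)"

lemma eval_mpoly_0 [simp]: "eval_mpoly \<phi> \<sigma> 0 = 0"
  by (simp add: eval_mpoly_def)

lemma eval_monom_superset:
  assumes "finite S" "Poly_Mapping.keys m \<subseteq> S"
  shows "eval_monom \<sigma> m = (\<Prod>i\<in>S. \<sigma> i ^ Poly_Mapping.lookup m i)"
  unfolding eval_monom_def
  by (rule prod.mono_neutral_left) (use assms in \<open>auto simp: in_keys_iff\<close>)

lemma eval_monom_add: "eval_monom \<sigma> (m + m') = eval_monom \<sigma> m * eval_monom \<sigma> m'"
proof -
  let ?S = "Poly_Mapping.keys m \<union> Poly_Mapping.keys m'"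
  have "Poly_Mapping.keys (m + m') \<subseteq> ?S"
    by (rule keys_add)
  then show ?thesis
    by (subst (1 2 3) eval_monom_superset[of ?S]) (auto simp: lookup_add power_add prod.distrib)
qed

lemma mpoly_eq_sum_single:
  "f = (\<Sum>m\<in>Poly_Mapping.keys f. Poly_Mapping.single m (Poly_Mapping.lookup f m))"
  by (rule poly_mapping_eqI) (auto simp: lookup_sum lookup_single when_def in_keys_iff)

context comm_semiring_hom
begin

lemma eval_mpoly_superset:
  assumes "finite S" "Poly_Mapping.keys f \<subseteq> S"
  shows "eval_mpoly hom \<sigma> f = (\<Sum>m\<in>S. hom (Poly_Mapping.lookup f m) * eval_monom \<sigma> m)"
  unfolding eval_mpoly_def
  by (rule sum.mono_neutral_left) (use assms in \<open>auto simp: in_keys_iff\<close>)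

lemma eval_mpoly_add: "eval_mpoly hom \<sigma> (f + g) = eval_mpoly hom \<sigma> f + eval_mpoly hom \<sigma> g"
proof -
  let ?S = "Poly_Mapping.keys f \<union> Poly_Mapping.keys g"
  have "Poly_Mapping.keys (f + g) \<subseteq> ?S"
    by (rule keys_add)
  then show ?thesis
    by (subst (1 2 3) eval_mpoly_superset[of ?S])
       (auto simp: lookup_add hom_add distrib_right sum.distrib)
qed

lemma eval_mpoly_single: "eval_mpoly hom \<sigma> (Poly_Mapping.single m c) = hom c * eval_monom \<sigma> m"
  by (subst eval_mpoly_superset[of "{m}"]) auto

lemma eval_mpoly_sum: "eval_mpoly hom \<sigma> (\<Sum>x\<in>A. f x) = (\<Sum>x\<in>A. eval_mpoly hom \<sigma> (f x))"
  by (induction A rule: infinite_finite_induct) (simp_all add: eval_mpoly_add)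

lemma eval_mpoly_mult: "eval_mpoly hom \<sigma> (f * g) = eval_mpoly hom \<sigma> f * eval_mpoly hom \<sigma> g"
proof -
  have "f * g = (\<Sum>m\<in>Poly_Mapping.keys f. \<Sum>m'\<in>Poly_Mapping.keys g.
      Poly_Mapping.single (m + m') (Poly_Mapping.lookup f m * Poly_Mapping.lookup g m'))"
    by (subst (1) mpoly_eq_sum_single[of f], subst (1) mpoly_eq_sum_single[of g])
       (simp add: sum_product mult_single)
  then have "eval_mpoly hom \<sigma> (f * g) = (\<Sum>m\<in>Poly_Mapping.keys f. \<Sum>m'\<in>Poly_Mapping.keys g.
      hom (Poly_Mapping.lookup f m) * eval_monom \<sigma> m * (hom (Poly_Mapping.lookup g m') * eval_monom \<sigma> m'))"
    by (simp add: eval_mpoly_sum eval_mpoly_single eval_monom_add hom_mult mult_ac)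
  also have "\<dots> = eval_mpoly hom \<sigma> f * eval_mpoly hom \<sigma> g"
    by (simp add: eval_mpoly_def sum_product)
  finally show ?thesis .
qed

lemma eval_mpoly_1: "eval_mpoly hom \<sigma> 1 = 1"
  using eval_mpoly_single[where m = 0 and c = 1] by (simp add: eval_monom_def)

lemma eval_mpoly_power: "eval_mpoly hom \<sigma> (f ^ n) = eval_mpoly hom \<sigma> f ^ n"
  by (induction n) (simp_all add: eval_mpoly_1 eval_mpoly_mult)

lemma hom_eval_mpoly: "hom (eval_mpoly \<phi> \<sigma> f) = eval_mpoly (hom \<circ> \<phi>) (hom \<circ> \<sigma>) f"
  by (simp add: eval_mpoly_def eval_monom_def hom_distribs)

end

lemma msubst_eq_eval_mpoly: "msubst \<tau> f = eval_mpoly mconst \<tau> f"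
  by (simp add: msubst_def eval_mpoly_def eval_monom_def)

context comm_ring_hom
begin

lemma eval_mpoly_mconst [simp]: "eval_mpoly hom \<sigma> (mconst c) = hom c"
  by (simp add: mconst_def eval_mpoly_single eval_monom_def)

lemma eval_mpoly_mvar [simp]: "eval_mpoly hom \<sigma> (mvar i) = \<sigma> i"
  by (simp add: mvar_def eval_mpoly_single eval_monom_def)

lemma comm_ring_hom_eval_mpoly: "comm_ring_hom (eval_mpoly hom \<sigma>)"
  by unfold_locales (simp_all add: eval_mpoly_1 eval_mpoly_add eval_mpoly_mult)

lemma eval_mpoly_msubst:
  "eval_mpoly hom \<sigma> (msubst \<tau> f) = eval_mpoly hom (\<lambda>i. eval_mpoly hom \<sigma> (\<tau> i)) f"
proof -
  interpret E: comm_ring_hom "eval_mpoly hom \<sigma>"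
    by (rule comm_ring_hom_eval_mpoly)
  show ?thesis
    unfolding msubst_eq_eval_mpoly E.hom_eval_mpoly by (simp add: comp_def)
qed

end

definition point4 :: "'b \<Rightarrow> 'b \<Rightarrow> 'b \<Rightarrow> 'b \<Rightarrow> nat \<Rightarrow> 'b::zero" where
  "point4 x1 x2 y1 y2 k =
    (if k = 0 then x1 else if k = 1 then x2 else if k = 2 then y1 else if k = 3 then y2 else 0)"

lemma point4_simps [simp]:
  "point4 x1 x2 y1 y2 0 = x1" "point4 x1 x2 y1 y2 1 = x2" "point4 x1 x2 y1 y2 (Suc 0) = x2"
  "point4 x1 x2 y1 y2 2 = y1" "point4 x1 x2 y1 y2 3 = y2"
  by (simp_all add: point4_def)

context field_hom
begin

lemma eval_act_x_point4:
  "eval_mpoly hom (point4 x1 x2 y1 y2) (act_x g f) =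
    eval_mpoly hom (point4 (hom (g $$ (0,0)) * x1 + hom (g $$ (0,1)) * x2)
      (hom (g $$ (1,0)) * x1 + hom (g $$ (1,1)) * x2) y1 y2) f"
  unfolding act_x_def eval_mpoly_msubst
  by (rule arg_cong[where f = "\<lambda>\<sigma>. eval_mpoly hom \<sigma> f"], rule ext)
     (auto simp: point4_def eval_mpoly_add eval_mpoly_mult numeral_2_eq_2 numeral_3_eq_3)

lemma eval_act_xy_point4:
  "eval_mpoly hom (point4 x1 x2 y1 y2) (act_xy g f) =
    eval_mpoly hom (point4 (hom (g $$ (0,0)) * x1 + hom (g $$ (0,1)) * x2)
      (hom (g $$ (1,0)) * x1 + hom (g $$ (1,1)) * x2)
      (hom (g $$ (0,0)) * y1 + hom (g $$ (0,1)) * y2)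
      (hom (g $$ (1,0)) * y1 + hom (g $$ (1,1)) * y2)) f"
  unfolding act_xy_def eval_mpoly_msubst
  by (rule arg_cong[where f = "\<lambda>\<sigma>. eval_mpoly hom \<sigma> f"], rule ext)
     (auto simp: point4_def eval_mpoly_add eval_mpoly_mult numeral_2_eq_2 numeral_3_eq_3)

lemma eval_fpoly_point4:
  "eval_mpoly hom (point4 x1 x2 y1 y2) (fpoly p j) =
    (if j \<le> p + 1 then (x1 * y1 + x2 * y2) ^ j
     else (\<Sum>k\<in>O2. (hom (k $$ (0,0)) * x1 + hom (k $$ (0,1)) * x2) ^ (2 * p + 2 - j)
       * (hom (k $$ (0,0)) * y1 + hom (k $$ (0,1)) * y2) ^ (j - (p + 1))))"
proof -
  have "p + 1 - (j - (p + 1)) = 2 * p + 2 - j" if "\<not> j \<le> p + 1"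
    using that by linarith
  then show ?thesis
    by (simp add: fpoly_def u_inv_def Tr_def Let_def eval_act_xy_point4
        eval_mpoly_add eval_mpoly_mult eval_mpoly_power eval_mpoly_sum)
qed

end

interpretation to_ac: field_hom to_ac
  by unfold_locales simp_all

section \<open>Fields of prime order\<close>

lemma CHAR_eq_card_if_prime_card:
  assumes "prime (card (UNIV :: 'a::ring_1 set))"
  shows "CHAR('a) = card (UNIV :: 'a set)"
  using CHAR_dvd_CARD[where 'a = 'a] CHAR_not_1[where 'a = 'a] assms by (auto simp: prime_nat_iff)

lemma of_nat_surj_if_prime_card:
  assumes "prime (card (UNIV :: 'a::ring_1 set))"
  shows "\<exists>k. x = (of_nat k :: 'a)"
proof -
  let ?p = "card (UNIV :: 'a set)"
  have "inj_on (of_nat :: nat \<Rightarrow> 'a) {..<?p}"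
  proof (rule inj_onI)
    fix m n assume m: "m \<in> {..<?p}" and n: "n \<in> {..<?p}" and eq: "(of_nat m :: 'a) = of_nat n"
    have "[m = n] (mod ?p)"
      using eq CHAR_eq_card_if_prime_card[OF assms] by (metis of_nat_eq_iff_cong_CHAR)
    with m n show "m = n"
      by (metis lessThan_iff cong_less_modulus_unique_nat)
  qed
  then have "card (of_nat ` {..<?p} :: 'a set) = ?p"
    using card_image by fastforce
  moreover have "finite (UNIV :: 'a set)"
    using assms card.infinite not_prime_0 by metis
  ultimately have "of_nat ` {..<?p} = (UNIV :: 'a set)"
    by (metis card_subset_eq subset_UNIV)
  then show ?thesis
    by blast
qed

lemma of_nat_power_CHAR:
  assumes "prime CHAR('a::comm_semiring_1)"
  shows "(of_nat k :: 'a) ^ CHAR('a) = of_nat k"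
proof (induction k)
  case 0
  show ?case
    using prime_gt_0_nat[OF assms] by (simp add: power_0_left)
next
  case (Suc k)
  then show ?case
    using freshmans_dream[OF assms refl, of "of_nat k" 1] by (simp add: add.commute)
qed

lemma power_card_eq_self_if_prime_card:
  fixes x :: "'a::comm_ring_1"
  assumes "prime (card (UNIV :: 'a set))"
  shows "x ^ card (UNIV :: 'a set) = x"
  using of_nat_surj_if_prime_card[OF assms, of x] of_nat_power_CHAR[where 'a = 'a]
    CHAR_eq_card_if_prime_card[OF assms] assms by auto

lemma square_ne_neg_one_if_card_3_mod_4:
  fixes x :: "'a::field"
  assumes prime: "prime (card (UNIV :: 'a set))" and mod_4: "card (UNIV :: 'a set) mod 4 = 3"
  shows "x * x \<noteq> -1"
proof
  let ?p = "card (UNIV :: 'a set)"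
  assume sq: "x * x = -1"
  define q where "q = ?p div 4"
  have q: "?p = Suc (2 * (2 * q + 1))"
    using mod_4 unfolding q_def by presburger
  have "x * x ^ (2 * (2 * q + 1)) = x * 1"
    using power_card_eq_self_if_prime_card[OF prime, of x] by (simp add: q)
  moreover have "x \<noteq> 0"
    using sq by auto
  ultimately have "1 = x ^ (2 * (2 * q + 1))"
    by simp
  also have "\<dots> = (x * x) ^ (2 * q + 1)"
    by (simp only: power_mult power2_eq_square)
  also have "\<dots> = -1"
    using sq by simp
  finally have "of_nat 2 = (0 :: 'a)"
    by (simp add: eq_neg_iff_add_eq_0)
  then have "?p dvd 2"
    by (simp only: of_nat_eq_0_iff_char_dvd CHAR_eq_card_if_prime_card[OF prime])
  then show False
    using mod_4 by (auto dest: dvd_imp_le)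
qed

section \<open>The orthogonal group \<open>O\<^sub>2\<close>\<close>

lemma mat_2x2_eqI:
  assumes "A \<in> carrier_mat 2 2" "B \<in> carrier_mat 2 2"
    and "A $$ (0,0) = B $$ (0,0)" "A $$ (0,1) = B $$ (0,1)"
    and "A $$ (1,0) = B $$ (1,0)" "A $$ (1,1) = B $$ (1,1)"
  shows "A = B"
proof (rule eq_matI)
  fix i j assume "i < dim_row B" "j < dim_col B"
  then have "i = 0 \<or> i = 1" "j = 0 \<or> j = 1"
    using assms(2) by auto
  then show "A $$ (i, j) = B $$ (i, j)"
    using assms by auto
qed (use assms in auto)

lemma O2_iff_orthonormal_columns:
  "g \<in> O2 \<longleftrightarrow> g \<in> carrier_mat 2 2 \<and>
    g $$ (0,0) * g $$ (0,0) + g $$ (1,0) * g $$ (1,0) = 1 \<and>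
    g $$ (0,1) * g $$ (0,1) + g $$ (1,1) * g $$ (1,1) = 1 \<and>
    g $$ (0,0) * g $$ (0,1) + g $$ (1,0) * g $$ (1,1) = 0"
proof (cases "g \<in> carrier_mat 2 2")
  case g: True
  have gram: "(transpose_mat g * g) $$ (i, j) = g $$ (0, i) * g $$ (0, j) + g $$ (1, i) * g $$ (1, j)"
    if "i < 2" "j < 2" for i j
    using g that by (simp add: scalar_prod_def numeral_2_eq_2)
  have "g * transpose_mat g = 1\<^sub>m 2" if "transpose_mat g * g = 1\<^sub>m 2"
    using mat_mult_left_right_inverse[of "transpose_mat g" 2 g] g that by auto
  then have "g \<in> O2 \<longleftrightarrow> transpose_mat g * g = 1\<^sub>m 2"
    using g by (auto simp: O2_def invertible_mat_def inverts_mat_def)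
  also have "\<dots> \<longleftrightarrow> (\<forall>i<2. \<forall>j<2.
      g $$ (0, i) * g $$ (0, j) + g $$ (1, i) * g $$ (1, j) = (if i = j then 1 else 0))"
    using g by (simp add: mat_eq_iff gram del: index_mult_mat(1))
  finally show ?thesis
    using g by (auto simp: numeral_2_eq_2 less_Suc_eq mult.commute)
qed (simp add: O2_def)

definition unit_circle :: "('a::field \<times> 'a) set" where
  "unit_circle = {(a, c). a * a + c * c = 1}"

definition rotation_mat :: "'a::field \<Rightarrow> 'a \<Rightarrow> 'a mat" where
  "rotation_mat a c = mat 2 2 (\<lambda>(i, j). if i = j then a else if i = 0 then - c else c)"

definition reflection_mat :: "'a::field \<Rightarrow> 'a \<Rightarrow> 'a mat" where
  "reflection_mat a c = mat 2 2 (\<lambda>(i, j). if i = j then (if i = 0 then a else - a) else c)"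

lemma rotation_mat_simps [simp]:
  "rotation_mat a c \<in> carrier_mat 2 2"
  "rotation_mat a c $$ (0, 0) = a" "rotation_mat a c $$ (0, Suc 0) = - c"
  "rotation_mat a c $$ (Suc 0, 0) = c" "rotation_mat a c $$ (Suc 0, Suc 0) = a"
  by (auto simp: rotation_mat_def)

lemma reflection_mat_simps [simp]:
  "reflection_mat a c \<in> carrier_mat 2 2"
  "reflection_mat a c $$ (0, 0) = a" "reflection_mat a c $$ (0, Suc 0) = c"
  "reflection_mat a c $$ (Suc 0, 0) = c" "reflection_mat a c $$ (Suc 0, Suc 0) = - a"
  by (auto simp: reflection_mat_def)

lemma rotation_mat_in_O2: "(a, c) \<in> unit_circle \<Longrightarrow> rotation_mat a c \<in> O2"
  by (simp add: O2_iff_orthonormal_columns unit_circle_def algebra_simps)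

lemma reflection_mat_in_O2: "(a, c) \<in> unit_circle \<Longrightarrow> reflection_mat a c \<in> O2"
  by (simp add: O2_iff_orthonormal_columns unit_circle_def algebra_simps)

lemma O2_cases:
  assumes "g \<in> O2"
  obtains a c where "(a, c) \<in> unit_circle" "g = rotation_mat a c"
    | a c where "(a, c) \<in> unit_circle" "g = reflection_mat a c"
proof -
  define a b c d where "a = g $$ (0,0)" and "b = g $$ (0,1)" and "c = g $$ (1,0)" and "d = g $$ (1,1)"
  have g: "g \<in> carrier_mat 2 2" and col0: "a * a + c * c = 1" and col1: "b * b + d * d = 1"
    and orth: "a * b + c * d = 0"
    using assms by (simp_all add: O2_iff_orthonormal_columns a_def b_def c_def d_def)
  define l where "l = a * d - b * c"
  \<comment> \<open>the second column is \<open>l\<close> times the first one turned by a right angle, and \<open>l\<^sup>2 = 1\<close>\<close>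
  have b: "b = - l * c"
  proof -
    have "b = b * (a * a + c * c)"
      using col0 by simp
    also have "\<dots> = a * (a * b + c * d) - c * l"
      by (simp add: algebra_simps l_def)
    finally show ?thesis
      using orth by simp
  qed
  have d: "d = l * a"
  proof -
    have "d = d * (a * a + c * c)"
      using col0 by simp
    also have "\<dots> = a * l + c * (a * b + c * d)"
      by (simp add: algebra_simps l_def)
    finally show ?thesis
      using orth by simp
  qed
  have "1 = b * b + d * d"
    using col1 by simp
  also have "\<dots> = l * l * (a * a + c * c)"
    by (simp add: b d algebra_simps)
  finally have "(l - 1) * (l + 1) = 0"
    using col0 by (simp add: algebra_simps)
  then have "l = 1 \<or> l = -1"
    by (auto simp: eq_neg_iff_add_eq_0)
  moreover have circle: "(a, c) \<in> unit_circle"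
    using col0 by (simp add: unit_circle_def)
  ultimately show thesis
  proof (elim disjE)
    assume "l = 1"
    then have "g = rotation_mat a c"
      by (intro mat_2x2_eqI) (use g b d in \<open>auto simp: a_def b_def c_def d_def\<close>)
    with circle show thesis
      by (rule that(1))
  next
    assume "l = -1"
    then have "g = reflection_mat a c"
      by (intro mat_2x2_eqI) (use g b d in \<open>auto simp: a_def b_def c_def d_def\<close>)
    with circle show thesis
      by (rule that(2))
  qed
qed

lemma O2_eq_rotations_Un_reflections:
  "O2 = (\<lambda>(a, c). rotation_mat a c) ` unit_circle \<union> (\<lambda>(a, c). reflection_mat a c) ` unit_circle"
  by (auto elim!: O2_cases simp: rotation_mat_in_O2 reflection_mat_in_O2)

lemma O2_row_norm: "g \<in> O2 \<Longrightarrow> g $$ (0,0) * g $$ (0,0) + g $$ (0,1) * g $$ (0,1) = 1"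
  by (erule O2_cases) (auto simp: unit_circle_def)

lemma card_O2_unit_circle:
  assumes "finite (UNIV :: 'a::field set)" and "(2 :: 'a) \<noteq> 0"
  shows "card (O2 :: 'a mat set) = 2 * card (unit_circle :: ('a \<times> 'a) set)"
proof -
  let ?rot = "\<lambda>(a, c :: 'a). rotation_mat a c" and ?refl = "\<lambda>(a, c :: 'a). reflection_mat a c"
  have "inj ?rot" "inj ?refl"
    by (auto intro!: injI dest!: arg_cong[where f = "\<lambda>g. (g $$ (0,0), g $$ (1,0))"])
  then have "card (?rot ` unit_circle) = card (unit_circle :: ('a \<times> 'a) set)"
    "card (?refl ` unit_circle) = card (unit_circle :: ('a \<times> 'a) set)"
    by (auto intro!: card_image inj_on_subset[OF _ subset_UNIV])
  moreover have "?rot ` unit_circle \<inter> ?refl ` (unit_circle :: ('a \<times> 'a) set) = {}"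
  proof (rule ccontr)
    assume "\<not> ?thesis"
    then obtain a c a' c' :: 'a where "(a, c) \<in> unit_circle" "rotation_mat a c = reflection_mat a' c'"
      by auto
    then have "a * a + c * c = 1" "a = a'" "a = - a'" "- c = c'" "c = c'"
      by (auto simp: unit_circle_def dest!: arg_cong[where f = "\<lambda>g. (g $$ (0,0), g $$ (0,1), g $$ (1,0), g $$ (1,1))"])
    then have "2 * a = 0" "2 * c = 0" "a * a + c * c = 1"
      by simp_all
    then show False
      using assms(2) by simp
  qed
  moreover have "finite (unit_circle :: ('a \<times> 'a) set)"
    using assms(1) by (simp add: finite_Prod_UNIV finite_subset[of _ UNIV])
  ultimately show ?thesis
    unfolding O2_eq_rotations_Un_reflections
    by (simp add: card_Un_disjoint)
qed

section \<open>Polynomials with many roots, and determinants\<close>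

lemma coeffs_eq_0_if_more_roots_than_degree:
  fixes c :: "'i \<Rightarrow> 'b::idom"
  assumes "finite J" and "inj_on e J" and "\<And>j. j \<in> J \<Longrightarrow> e j \<le> N"
    and "N < card R" and "\<And>x. x \<in> R \<Longrightarrow> (\<Sum>j\<in>J. c j * x ^ e j) = 0"
    and "j \<in> J"
  shows "c j = 0"
proof -
  define Q where "Q = (\<Sum>j\<in>J. monom (c j) (e j))"
  have coeff_Q: "coeff Q k = (\<Sum>j\<in>J. if e j = k then c j else 0)" for k
    by (simp add: Q_def coeff_sum coeff_monom)
  have "Q = 0"
  proof (rule ccontr)
    assume "Q \<noteq> 0"
    have "coeff Q k = 0" if "N < k" for k
      unfolding coeff_Q using assms(3) that by (intro sum.neutral) fastforce
    then have "degree Q \<le> N"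
      by (intro degree_le) blast
    moreover have "R \<subseteq> {x. poly Q x = 0}"
      using assms(5) by (auto simp: Q_def poly_sum poly_monom)
    then have "card R \<le> card {x. poly Q x = 0}"
      using poly_roots_finite[OF \<open>Q \<noteq> 0\<close>] by (rule card_mono[rotated])
    moreover have "card {x. poly Q x = 0} \<le> degree Q"
      using \<open>Q \<noteq> 0\<close> by (rule card_poly_roots_bound)
    ultimately show False
      using assms(4) by linarith
  qed
  have "coeff Q (e j) = (\<Sum>j'\<in>J. if j' = j then c j' else 0)"
    unfolding coeff_Q by (rule sum.cong) (use assms(2,6) in \<open>auto dest: inj_onD\<close>)
  also have "\<dots> = c j"
    using assms(1,6) by simp
  finally show ?thesis
    using \<open>Q = 0\<close> by simp
qed

lemma det_mat_ne_0_if_rows_independent: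
  fixes F :: "'g \<Rightarrow> nat \<Rightarrow> 'a::idom"
  assumes h: "bij_betw h {0..<n} G"
    and indep: "\<And>v. (\<And>g. g \<in> G \<Longrightarrow> (\<Sum>j<n. F g j * v j) = 0) \<Longrightarrow> \<forall>j<n. v j = 0"
  shows "det (mat n n (\<lambda>(i, j). F (h i) j)) \<noteq> 0"
proof
  let ?M = "mat n n (\<lambda>(i, j). F (h i) j)"
  assume "det ?M = 0"
  then obtain v where v: "v \<in> carrier_vec n" "v \<noteq> 0\<^sub>v n" "?M *\<^sub>v v = 0\<^sub>v n"
    using det_0_iff_vec_prod_zero[of ?M n] by auto
  have "(\<Sum>j<n. F g j * v $ j) = 0" if g: "g \<in> G" for g
  proof -
    obtain i where i: "i < n" "h i = g"
      using h g by (auto simp: bij_betw_def)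
    have "(?M *\<^sub>v v) $ i = (\<Sum>j<n. F g j * v $ j)"
      using v(1) i by (auto simp: scalar_prod_def lessThan_atLeast0 intro!: sum.cong)
    with v(3) i show ?thesis
      by simp
  qed
  then have "\<forall>j<n. v $ j = 0"
    by (rule indep)
  then have "v = 0\<^sub>v n"
    using v(1) by (intro eq_vecI) auto
  with v(2) show False ..
qed

section \<open>Evaluation at \<open>(i, 1, i, 1)\<close>\<close>

definition sqrt_neg_one :: "'a::field alg_closure" where
  "sqrt_neg_one = (SOME i. i * i = -1)"

lemma sqrt_neg_one_square: "sqrt_neg_one * sqrt_neg_one = (-1 :: 'a::field alg_closure)"
proof -
  obtain i :: "'a alg_closure" where "i ^ 2 = -1"
    using nth_root_exists[of 2 "-1 :: 'a alg_closure"] by auto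
  then have "i * i = -1"
    by (simp add: power2_eq_square)
  then show ?thesis
    unfolding sqrt_neg_one_def by (rule someI)
qed

lemma sqrt_neg_one_square_mult: "sqrt_neg_one * (sqrt_neg_one * x) = - (x :: 'a::field alg_closure)"
  by (simp add: mult.assoc[symmetric] sqrt_neg_one_square)

definition gauss :: "'a::field \<Rightarrow> 'a \<Rightarrow> 'a alg_closure" where
  "gauss a c = to_ac a + to_ac c * sqrt_neg_one"

definition gaussian_point :: "nat \<Rightarrow> 'a::field alg_closure" where
  "gaussian_point = point4 sqrt_neg_one 1 sqrt_neg_one 1"

text \<open>The hypothesis \<open>card_O2\<close> holds for every \<open>p\<close> with \<open>p mod 4 = 3\<close>; in the theorem it
  is supplied by the enumeration of \<open>O\<^sub>2\<close>.\<close>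
locale orthogonal_group_3_mod_4 =
  fixes p :: nat and field :: "'a::field itself"
  assumes prime_p: "prime p" and p_mod_4: "p mod 4 = 3" and card_field: "card (UNIV :: 'a set) = p"
    and card_O2: "card (O2 :: 'a mat set) = 2 * p + 2"
begin

lemma CHAR_field: "CHAR('a) = p"
  using CHAR_eq_card_if_prime_card[where 'a = 'a] prime_p card_field by simp

lemma two_ne_0: "(2 :: 'a) \<noteq> 0"
proof
  assume "(2 :: 'a) = 0"
  then have "p dvd 2"
    using of_nat_eq_0_iff_char_dvd[of 2, where 'a = 'a] CHAR_field by simp
  then show False
    using p_mod_4 by (auto dest: dvd_imp_le)
qed

lemma finite_UNIV_field: "finite (UNIV :: 'a set)"
proof (rule ccontr)
  assume "infinite (UNIV :: 'a set)"
  then show False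
    using card_field prime_p by simp
qed

lemma card_unit_circle: "card (unit_circle :: ('a \<times> 'a) set) = p + 1"
  using card_O2 card_O2_unit_circle[OF finite_UNIV_field two_ne_0] by simp

lemma gauss_eq_iff: "gauss (a :: 'a) c = gauss a' c' \<longleftrightarrow> a = a' \<and> c = c'"
proof
  assume eq: "gauss a c = gauss a' c'"
  show "a = a' \<and> c = c'"
  proof (cases "c = c'")
    case False
    define x where "x = (a' - a) / (c - c')"
    have "sqrt_neg_one = to_ac x"
      using eq False by (simp add: x_def gauss_def field_simps)
    then have "to_ac (x * x) = to_ac (-1)"
      using sqrt_neg_one_square[where 'a = 'a] by simp
    then have "x * x = -1"
      by (simp only: to_ac_eq_iff)
    then show ?thesis
      using square_ne_neg_one_if_card_3_mod_4 prime_p p_mod_4 card_field by metis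
  qed (use eq in \<open>simp add: gauss_def\<close>)
qed simp

lemma sqrt_neg_one_power_p: "sqrt_neg_one ^ p = - (sqrt_neg_one :: 'a alg_closure)"
proof -
  define q where "q = p div 4"
  have "p = Suc (2 * (2 * q + 1))"
    using p_mod_4 unfolding q_def by presburger
  then have "sqrt_neg_one ^ p = sqrt_neg_one * (sqrt_neg_one * sqrt_neg_one) ^ (2 * q + 1)"
    by (simp only: power_Suc power_mult power2_eq_square)
  then show ?thesis
    by (simp add: sqrt_neg_one_square)
qed

lemma gauss_power_p: "gauss (a :: 'a) c ^ p = gauss a (- c)"
proof -
  have "gauss a c ^ p = to_ac (a ^ p) + to_ac (c ^ p) * sqrt_neg_one ^ p"
    unfolding gauss_def
    by (subst freshmans_dream) (simp_all add: CHAR_field prime_p power_mult_distrib)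
  also have "\<dots> = gauss a (- c)"
    using power_card_eq_self_if_prime_card[where 'a = 'a] prime_p card_field
    by (simp add: gauss_def sqrt_neg_one_power_p)
  finally show ?thesis .
qed

lemma gauss_norm: "gauss (a :: 'a) c ^ (p + 1) = to_ac (a * a + c * c)"
proof -
  have "gauss a c ^ (p + 1) = gauss a (- c) * gauss a c"
    by (simp add: gauss_power_p)
  also have "\<dots> = to_ac (a * a) - to_ac (c * c) * (sqrt_neg_one * sqrt_neg_one)"
    by (simp add: gauss_def algebra_simps)
  finally show ?thesis
    by (simp add: sqrt_neg_one_square)
qed

abbreviation entry :: "'a mat \<Rightarrow> nat \<Rightarrow> 'a alg_closure" where
  "entry g j \<equiv> eval_mpoly to_ac gaussian_point (act_x g (fpoly p j))"

lemma entry_rotation_u: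
  fixes a c :: 'a
  assumes "j \<le> p + 1"
  shows "entry (rotation_mat a c) j = 0 ^ j"
  using assms
  by (simp add: gaussian_point_def to_ac.eval_act_x_point4 to_ac.eval_fpoly_point4
      algebra_simps sqrt_neg_one_square_mult)

lemma entry_rotation_Tr:
  fixes a c :: 'a
  assumes "p + 1 < j" and "j \<le> 2 * p + 2"
  shows "entry (rotation_mat a c) j = 2 * gauss a c ^ (2 * p + 2 - j)"
proof -
  let ?z = "gauss a c"
  have summand: "(to_ac (k $$ (0,0)) * (?z * sqrt_neg_one) + to_ac (k $$ (0,1)) * ?z) ^ (2 * p + 2 - j)
      * (to_ac (k $$ (0,0)) * sqrt_neg_one + to_ac (k $$ (0,1))) ^ (j - (p + 1)) = ?z ^ (2 * p + 2 - j)"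
    if "k \<in> O2" for k
  proof -
    let ?w = "gauss (k $$ (0,1)) (k $$ (0,0))"
    have "to_ac (k $$ (0,0)) * (?z * sqrt_neg_one) + to_ac (k $$ (0,1)) * ?z = ?z * ?w"
      by (simp add: gauss_def algebra_simps)
    moreover have "to_ac (k $$ (0,0)) * sqrt_neg_one + to_ac (k $$ (0,1)) = ?w"
      by (simp add: gauss_def algebra_simps)
    moreover have "?w ^ (2 * p + 2 - j) * ?w ^ (j - (p + 1)) = ?w ^ (p + 1)"
      using assms by (simp flip: power_add)
    moreover have "?w ^ (p + 1) = 1"
      unfolding gauss_norm using O2_row_norm[OF that] by (simp add: add.commute)
    ultimately show ?thesis
      by (simp add: power_mult_distrib mult.assoc)
  qed
  have "to_ac a * sqrt_neg_one - to_ac c = ?z * sqrt_neg_one" "to_ac c * sqrt_neg_one + to_ac a = ?z"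
    by (simp_all add: gauss_def algebra_simps sqrt_neg_one_square_mult)
  then have "entry (rotation_mat a c) j = (\<Sum>k\<in>(O2 :: 'a mat set). ?z ^ (2 * p + 2 - j))"
    using assms(1) summand
    by (simp add: gaussian_point_def to_ac.eval_act_x_point4 to_ac.eval_fpoly_point4 cong: sum.cong)
  also have "\<dots> = of_nat (2 * p + 2) * ?z ^ (2 * p + 2 - j)"
    using card_O2 by simp
  also have "(of_nat (2 * p + 2) :: 'a alg_closure) = 2"
    using of_nat_CHAR[where 'a = "'a alg_closure"] CHAR_field by simp
  finally show ?thesis .
qed

lemma entry_reflection_u:
  fixes a c :: 'a
  assumes "j \<le> p + 1"
  shows "entry (reflection_mat a c) j = (- 2 * gauss a (- c)) ^ j"
proof -
  have "(to_ac a * sqrt_neg_one + to_ac c) * sqrt_neg_one + (to_ac c * sqrt_neg_one - to_ac a)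
      = - 2 * gauss a (- c)"
    by (simp add: gauss_def algebra_simps sqrt_neg_one_square_mult)
  then show ?thesis
    using assms by (simp add: gaussian_point_def to_ac.eval_act_x_point4 to_ac.eval_fpoly_point4)
qed

lemma two_ne_0_alg_closure: "(2 :: 'a alg_closure) \<noteq> 0"
  using two_ne_0 to_ac_eq_0_iff[of "2 :: 'a"] by simp

lemma card_image_unit_circle:
  fixes f :: "'a \<times> 'a \<Rightarrow> 'b"
  assumes "inj f"
  shows "card (f ` unit_circle) = p + 1"
  using card_unit_circle assms by (simp add: card_image inj_on_subset[OF _ subset_UNIV])

lemma rotation_rows_kernel:
  fixes v :: "nat \<Rightarrow> 'a alg_closure"
  assumes rows: "\<And>a c. (a, c) \<in> unit_circle \<Longrightarrow> (\<Sum>j<2 * p + 2. entry (rotation_mat a c) j * v j) = 0"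
    and j: "j \<in> {0} \<union> {p + 2..<2 * p + 2}"
  shows "v j = 0"
proof -
  define J where "J = {0} \<union> {p + 2..<2 * p + 2}"
  define e where "e j = (if j = 0 then 0 else 2 * p + 2 - j)" for j
  define d where "d j = (if j = 0 then v 0 else 2 * v j)" for j
  have row_eq: "(\<Sum>j<2 * p + 2. entry (rotation_mat a c) j * v j) = (\<Sum>j\<in>J. d j * gauss a c ^ e j)"
    for a c :: 'a
  proof (rule sum.mono_neutral_cong_right)
    show "\<forall>j\<in>{..<2 * p + 2} - J. entry (rotation_mat a c) j * v j = 0"
      by (auto simp: J_def entry_rotation_u)
    show "entry (rotation_mat a c) j * v j = d j * gauss a c ^ e j" if "j \<in> J" for j
      using that by (auto simp: J_def d_def e_def entry_rotation_u entry_rotation_Tr)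
  qed (auto simp: J_def)
  have inj: "inj (\<lambda>(a, c :: 'a). gauss a c)"
    by (auto intro!: injI simp: gauss_eq_iff)
  have "d j = 0"
  proof (rule coeffs_eq_0_if_more_roots_than_degree[where J = J and e = e and N = p
        and R = "(\<lambda>(a, c). gauss a c) ` unit_circle"])
    show "finite J" "j \<in> J"
      using j by (simp_all add: J_def)
    show "inj_on e J"
      by (auto intro!: inj_onI simp: J_def e_def)
    show "e j \<le> p" if "j \<in> J" for j
      using that by (auto simp: J_def e_def)
    show "(\<Sum>j\<in>J. d j * x ^ e j) = 0" if "x \<in> (\<lambda>(a, c). gauss a c) ` unit_circle" for x
      using that rows row_eq by auto
  qed (simp add: card_image_unit_circle[OF inj])
  then show ?thesis
    using two_ne_0_alg_closure by (simp add: d_def split: if_splits)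
qed

lemma reflection_rows_kernel:
  fixes v :: "nat \<Rightarrow> 'a alg_closure"
  assumes rows: "\<And>a c. (a, c) \<in> unit_circle \<Longrightarrow> (\<Sum>j<2 * p + 2. entry (reflection_mat a c) j * v j) = 0"
    and zero: "\<And>j. j \<in> {0} \<union> {p + 2..<2 * p + 2} \<Longrightarrow> v j = 0"
    and j: "j \<in> {1..p + 1}"
  shows "v j = 0"
proof -
  let ?m = "\<lambda>(a, c :: 'a). - 2 * gauss a (- c)"
  have row_eq: "(\<Sum>j<2 * p + 2. entry (reflection_mat a c) j * v j)
      = ?m (a, c) * (\<Sum>j\<in>{1..p + 1}. v j * ?m (a, c) ^ (j - 1))" for a c :: 'a
  proof -
    have "(\<Sum>j<2 * p + 2. entry (reflection_mat a c) j * v j) = (\<Sum>j\<in>{1..p + 1}. v j * ?m (a, c) ^ j)"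
    proof (rule sum.mono_neutral_cong_right)
      show "\<forall>j\<in>{..<2 * p + 2} - {1..p + 1}. entry (reflection_mat a c) j * v j = 0"
        using zero by auto
    qed (auto simp: entry_reflection_u)
    also have "\<dots> = (\<Sum>j\<in>{1..p + 1}. ?m (a, c) * (v j * ?m (a, c) ^ (j - 1)))"
      by (intro sum.cong refl) (auto simp: power_eq_if)
    finally show ?thesis
      by (simp only: sum_distrib_left)
  qed
  have m_ne_0: "?m (a, c) \<noteq> 0" if "(a, c) \<in> unit_circle" for a c :: 'a
    using that two_ne_0_alg_closure gauss_eq_iff[of a "- c" 0 0]
    by (auto simp: unit_circle_def gauss_def)
  have inj: "inj ?m"
    using two_ne_0_alg_closure by (auto intro!: injI simp: gauss_eq_iff)
  show ?thesis
  proof (rule coeffs_eq_0_if_more_roots_than_degree[where J = "{1..p + 1}" and e = "\<lambda>j. j - 1"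
        and N = p and R = "?m ` unit_circle"])
    show "(\<Sum>j\<in>{1..p + 1}. v j * x ^ (j - 1)) = 0" if "x \<in> ?m ` unit_circle" for x
      using that rows row_eq m_ne_0 by fastforce
    show "inj_on (\<lambda>j. j - 1) {1..p + 1}"
      by (auto intro!: inj_onI)
    show "j - 1 \<le> p" if "j \<in> {1..p + 1}" for j
      using that by auto
    show "p < card (?m ` unit_circle)"
      using card_image_unit_circle[OF inj] by simp
  qed (use j in simp_all)
qed

lemma O2_rows_kernel:
  fixes v :: "nat \<Rightarrow> 'a alg_closure"
  assumes "\<And>g. g \<in> O2 \<Longrightarrow> (\<Sum>j<2 * p + 2. entry g j * v j) = 0" and "j < 2 * p + 2"
  shows "v j = 0"
proof -
  have rotations: "v j = 0" if "j \<in> {0} \<union> {p + 2..<2 * p + 2}" for j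
    by (rule rotation_rows_kernel[OF assms(1)[OF rotation_mat_in_O2] that])
  have "v j = 0" if "j \<in> {1..p + 1}" for j
    by (rule reflection_rows_kernel[OF assms(1)[OF reflection_mat_in_O2] rotations that])
  with rotations show ?thesis
    using assms(2) by (cases "j = 0 \<or> p + 2 \<le> j") auto
qed

end

theorem lemma3p3:
  fixes p :: nat and h :: "nat \<Rightarrow> 'a::field mat"
  assumes "prime p" and "p mod 4 = 3"
    and "card (UNIV :: 'a set) = p"
    and "bij_betw h {0..<2 * p + 2} (O2 :: 'a mat set)"
  shows "det (mat (2 * p + 2) (2 * p + 2) (\<lambda>(i, j). act_x (h i) (fpoly p j))) \<noteq> 0"
proof
  interpret orthogonal_group_3_mod_4 p "TYPE('a)"
    using assms bij_betw_same_card[OF assms(4)] by unfold_locales simp_all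
  interpret eval: comm_ring_hom "eval_mpoly to_ac gaussian_point"
    by (rule to_ac.comm_ring_hom_eval_mpoly)
  let ?M = "mat (2 * p + 2) (2 * p + 2) (\<lambda>(i, j). act_x (h i) (fpoly p j))"
  assume "det ?M = 0"
  have "det (mat (2 * p + 2) (2 * p + 2) (\<lambda>(i, j). entry (h i) j)) \<noteq> 0"
    by (rule det_mat_ne_0_if_rows_independent[OF assms(4)]) (use O2_rows_kernel in blast)
  moreover have "det (mat (2 * p + 2) (2 * p + 2) (\<lambda>(i, j). entry (h i) j)) =
      eval_mpoly to_ac gaussian_point (det ?M)"
    unfolding eval.hom_det[symmetric] by (intro arg_cong[where f = det]) auto
  ultimately show False
    using \<open>det ?M = 0\<close> by simp
qed

end
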